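(* Let $X$ be a normal ballean and $f:X\to Y$ an open macro-uniform map onto a ballean $Y$ that admits a bornologous section $s:Y\to X$ (i.e. $f(s(y))=y$ for all $y\in Y$). Then $Y$ is normal.
   Context: A ballean is a pair $(X,\mathcal E_X)$ where $X$ is a set and $\mathcal E_X$ is a family of subsets of $X\times X$ (entourages) such that: each $E\in\mathcal E_X$ contains the diagonal; for any $E,F\in\mathcal E_X$ there is $D\in\mathcal E_X$ with $E\circ F^{-1}\subset D$; and $\bigcup\mathcal E_X=X\times X$. For $E\in\mathcal E_X$, $x\in X$, $A\subset X$: $E[x]=\{y:(x,y)\in E\}$, $E[A]=\bigcup_{a\in A}E[a]$. $B\subset X$ is bounded if $B\subset E[x]$ for some $E\in\mathcal E_X$, $x\in X$; $\mathcal B_X$ is the family of bounded sets. Sets $A,B$ are asymptotically disjoint if $E[A]\cap E[B]\in\mathcal B_X$ for all $E\in\mathcal E_X$; $U$ is an asymptotic neighborhood of $A$ if $E[A]\setminus U\in\mathcal B_X$ for all $E$; $X$ is normal if any two asymptotically disjoint sets have disjoint asymptotic neighborhoods. A map $f:X\to Y$ is macro-uniform if for every $E_X\in\mathcal E_X$ there is $E_Y\in\mathcal E_Y$ with $f(E_X[x])\subset E_Y[f(x)]$ for all $x\in X$; open if for every $E_Y\in\mathcal E_Y$ there is $E_X\in\mathcal E_X$ with $f(E_X[x])\supset E_Y[f(x)]$ for all $x\in X$. A map $s:Y\to X$ is bornologous if $s(B)$ is bounded in $X$ for every bounded $B\subset Y$. *)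

theory Defs
  imports Main
begin

text \<open>A ballean is a carrier set X with a family of entourages (subsets of X x X).
  For an entourage e, e[x] is e `` {x} and e[A] is e `` A.\<close>

definition ballean :: "'a set \<Rightarrow> ('a \<times> 'a) set set \<Rightarrow> bool" where
  "ballean X \<E> \<longleftrightarrow>
     (\<forall>e\<in>\<E>. Id_on X \<subseteq> e \<and> e \<subseteq> X \<times> X) \<and>
     (\<forall>e\<in>\<E>. \<forall>f\<in>\<E>. \<exists>d\<in>\<E>. e O converse f \<subseteq> d) \<and>
     \<Union>\<E> = X \<times> X"

definition bounded_in :: "'a set \<Rightarrow> ('a \<times> 'a) set set \<Rightarrow> 'a set \<Rightarrow> bool" where
  "bounded_in X \<E> B \<longleftrightarrow> (\<exists>e\<in>\<E>. \<exists>x\<in>X. B \<subseteq> e `` {x})"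

definition asymp_disjoint :: "'a set \<Rightarrow> ('a \<times> 'a) set set \<Rightarrow> 'a set \<Rightarrow> 'a set \<Rightarrow> bool" where
  "asymp_disjoint X \<E> A B \<longleftrightarrow> (\<forall>e\<in>\<E>. bounded_in X \<E> (e `` A \<inter> e `` B))"

definition asymp_nbhd :: "'a set \<Rightarrow> ('a \<times> 'a) set set \<Rightarrow> 'a set \<Rightarrow> 'a set \<Rightarrow> bool" where
  "asymp_nbhd X \<E> U A \<longleftrightarrow> (\<forall>e\<in>\<E>. bounded_in X \<E> (e `` A - U))"

definition normal_ballean :: "'a set \<Rightarrow> ('a \<times> 'a) set set \<Rightarrow> bool" where
  "normal_ballean X \<E> \<longleftrightarrow>
     (\<forall>A B. A \<subseteq> X \<longrightarrow> B \<subseteq> X \<longrightarrow> asymp_disjoint X \<E> A B \<longrightarrow>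
        (\<exists>U V. U \<subseteq> X \<and> V \<subseteq> X \<and> asymp_nbhd X \<E> U A \<and> asymp_nbhd X \<E> V B \<and> U \<inter> V = {}))"

definition macro_uniform ::
  "'a set \<Rightarrow> ('a \<times> 'a) set set \<Rightarrow> 'b set \<Rightarrow> ('b \<times> 'b) set set \<Rightarrow> ('a \<Rightarrow> 'b) \<Rightarrow> bool" where
  "macro_uniform X \<E>X Y \<E>Y f \<longleftrightarrow>
     (\<forall>ex\<in>\<E>X. \<exists>ey\<in>\<E>Y. \<forall>x\<in>X. f ` (ex `` {x}) \<subseteq> ey `` {f x})"

definition open_map ::
  "'a set \<Rightarrow> ('a \<times> 'a) set set \<Rightarrow> 'b set \<Rightarrow> ('b \<times> 'b) set set \<Rightarrow> ('a \<Rightarrow> 'b) \<Rightarrow> bool" where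
  "open_map X \<E>X Y \<E>Y f \<longleftrightarrow>
     (\<forall>ey\<in>\<E>Y. \<exists>ex\<in>\<E>X. \<forall>x\<in>X. ey `` {f x} \<subseteq> f ` (ex `` {x}))"

definition bornologous ::
  "'b set \<Rightarrow> ('b \<times> 'b) set set \<Rightarrow> 'a set \<Rightarrow> ('a \<times> 'a) set set \<Rightarrow> ('b \<Rightarrow> 'a) \<Rightarrow> bool" where
  "bornologous Y \<E>Y X \<E>X s \<longleftrightarrow>
     (\<forall>B. B \<subseteq> Y \<longrightarrow> bounded_in Y \<E>Y B \<longrightarrow> bounded_in X \<E>X (s ` B))"

end

theory Submission
  imports Defs
begin

text \<open>Pull the problem back to X: for asymptotically disjoint A, B \<subseteq> Y the sets s(A) and
  the preimage of B are asymptotically disjoint in X, since by macro-uniformity of f the points of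
  s(A) close to that preimage all lie in s(A \<inter> E[B]) for one entourage E, which s keeps bounded.
  Normality of X separates them by disjoint asymptotic neighbourhoods U, V, and openness of f
  makes f(U) and Y - f(X - V) disjoint asymptotic neighbourhoods of A and B.\<close>

lemma ballean_entourage_subset: "ballean X E \<Longrightarrow> e \<in> E \<Longrightarrow> e \<subseteq> X \<times> X"
  unfolding ballean_def by blast

lemma ballean_refl: "ballean X E \<Longrightarrow> e \<in> E \<Longrightarrow> x \<in> X \<Longrightarrow> (x, x) \<in> e"
  unfolding ballean_def Id_on_def by blast

lemma ballean_relcomp_converse:
  "ballean X E \<Longrightarrow> e1 \<in> E \<Longrightarrow> e2 \<in> E \<Longrightarrow> \<exists>d\<in>E. e1 O converse e2 \<subseteq> d"
  unfolding ballean_def by (elim conjE) blast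

lemma ballean_converse_bound:
  assumes "ballean X E" "e \<in> E"
  shows "\<exists>d\<in>E. converse e \<subseteq> d"
proof -
  obtain d where d: "d \<in> E" "e O converse e \<subseteq> d"
    using ballean_relcomp_converse[OF assms assms(2)] by blast
  have "converse e \<subseteq> e O converse e"
  proof
    fix p assume "p \<in> converse e"
    then obtain a b where p: "p = (a, b)" "(b, a) \<in> e" by (cases p) auto
    then have "(a, a) \<in> e"
      using ballean_refl[OF assms] ballean_entourage_subset[OF assms] by blast
    with p show "p \<in> e O converse e" by blast
  qed
  with d show ?thesis by blast
qed

lemma ballean_relcomp_bound:
  assumes "ballean X E" "e1 \<in> E" "e2 \<in> E"
  shows "\<exists>d\<in>E. e1 O e2 \<subseteq> d"
proof -
  obtain c where c: "c \<in> E" "converse e2 \<subseteq> c"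
    using ballean_converse_bound[OF assms(1,3)] by blast
  obtain d where d: "d \<in> E" "e1 O converse c \<subseteq> d"
    using ballean_relcomp_converse[OF assms(1,2) c(1)] by blast
  have "e1 O e2 \<subseteq> e1 O converse c" using c(2) by blast
  with d show ?thesis by blast
qed

lemma bounded_in_subset: "bounded_in X E B \<Longrightarrow> C \<subseteq> B \<Longrightarrow> bounded_in X E C"
  unfolding bounded_in_def by (meson subset_trans)

lemma bounded_in_Image:
  assumes "ballean X E" "bounded_in X E B" "e \<in> E"
  shows "bounded_in X E (e `` B)"
proof -
  obtain g x where g: "g \<in> E" "x \<in> X" "B \<subseteq> g `` {x}"
    using assms(2) unfolding bounded_in_def by blast
  obtain d where d: "d \<in> E" "g O e \<subseteq> d"
    using ballean_relcomp_bound[OF assms(1) g(1) assms(3)] by blast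
  have "e `` B \<subseteq> d `` {x}" using g(3) d(2) by blast
  with d(1) g(2) show ?thesis unfolding bounded_in_def by blast
qed

lemma bounded_in_image_macro_uniform:
  assumes "macro_uniform X EntX Y EntY f" "f ` X = Y" "bounded_in X EntX B"
  shows "bounded_in Y EntY (f ` B)"
proof -
  obtain g x where g: "g \<in> EntX" "x \<in> X" "B \<subseteq> g `` {x}"
    using assms(3) unfolding bounded_in_def by blast
  obtain ey where ey: "ey \<in> EntY" "\<forall>x\<in>X. f ` (g `` {x}) \<subseteq> ey `` {f x}"
    using assms(1) g(1) unfolding macro_uniform_def by blast
  have "f ` B \<subseteq> ey `` {f x}" using ey(2) g(2,3) by blast
  with ey(1) g(2) assms(2) show ?thesis unfolding bounded_in_def by blast
qed

lemma asymp_disjoint_section_preimage: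
  assumes X: "ballean X EntX" and Y: "ballean Y EntY"
    and f: "macro_uniform X EntX Y EntY f"
    and s: "s ` Y \<subseteq> X" "\<forall>y\<in>Y. f (s y) = y" "bornologous Y EntY X EntX s"
    and A: "A \<subseteq> Y" and AB: "asymp_disjoint Y EntY A B"
  shows "asymp_disjoint X EntX (s ` A) {x\<in>X. f x \<in> B}"
  unfolding asymp_disjoint_def
proof
  fix e assume e: "e \<in> EntX"
  obtain d where d: "d \<in> EntX" "e O converse e \<subseteq> d"
    using ballean_relcomp_converse[OF X e e] by blast
  obtain ey where ey: "ey \<in> EntY" "\<forall>x\<in>X. f ` (d `` {x}) \<subseteq> ey `` {f x}"
    using f d(1) unfolding macro_uniform_def by blast
  obtain ey' where ey': "ey' \<in> EntY" "converse ey \<subseteq> ey'"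
    using ballean_converse_bound[OF Y ey(1)] by blast
  define C where "C = A \<inter> ey' `` B"
  have "bounded_in Y EntY C"
  proof (rule bounded_in_subset)
    show "bounded_in Y EntY (ey' `` A \<inter> ey' `` B)"
      using AB ey'(1) unfolding asymp_disjoint_def by blast
    show "C \<subseteq> ey' `` A \<inter> ey' `` B"
      using ballean_refl[OF Y ey'(1)] A unfolding C_def by blast
  qed
  moreover have "C \<subseteq> Y" using A unfolding C_def by blast
  ultimately have "bounded_in X EntX (s ` C)"
    using s(3) unfolding bornologous_def by blast
  moreover have "e `` (s ` A) \<inter> e `` {x\<in>X. f x \<in> B} \<subseteq> e `` (s ` C)"
  proof
    fix z assume "z \<in> e `` (s ` A) \<inter> e `` {x\<in>X. f x \<in> B}"
    then obtain a b where ab: "a \<in> A" "b \<in> X" "f b \<in> B" "(s a, z) \<in> e" "(b, z) \<in> e"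
      by blast
    have "(s a, b) \<in> d" using ab(4,5) d(2) by blast
    moreover have "s a \<in> X" "f (s a) = a" using ab(1) A s(1,2) by auto
    ultimately have "(a, f b) \<in> ey" using ey(2) by force
    then have "(f b, a) \<in> ey'" using ey'(2) by blast
    with ab(1,3) have "a \<in> C" unfolding C_def by blast
    with ab(4) show "z \<in> e `` (s ` C)" by blast
  qed
  ultimately show "bounded_in X EntX (e `` (s ` A) \<inter> e `` {x\<in>X. f x \<in> B})"
    by (rule bounded_in_subset[OF bounded_in_Image[OF X _ e]])
qed

lemma asymp_nbhd_image_open:
  assumes "open_map X EntX Y EntY f" "macro_uniform X EntX Y EntY f" "f ` X = Y"
    and "C \<subseteq> X" "asymp_nbhd X EntX U C"
  shows "asymp_nbhd Y EntY (f ` U) (f ` C)"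
  unfolding asymp_nbhd_def
proof
  fix ey assume "ey \<in> EntY"
  then obtain ex where ex: "ex \<in> EntX" "\<forall>x\<in>X. ey `` {f x} \<subseteq> f ` (ex `` {x})"
    using assms(1) unfolding open_map_def by blast
  have "ey `` (f ` C) - f ` U \<subseteq> f ` (ex `` C - U)"
  proof
    fix y assume "y \<in> ey `` (f ` C) - f ` U"
    then obtain c where c: "c \<in> C" "y \<in> ey `` {f c}" "y \<notin> f ` U" by blast
    with ex(2) assms(4) obtain x where "x \<in> ex `` {c}" "y = f x" by blast
    with c show "y \<in> f ` (ex `` C - U)" by blast
  qed
  moreover have "bounded_in Y EntY (f ` (ex `` C - U))"
    using bounded_in_image_macro_uniform[OF assms(2,3)] assms(5) ex(1)
    unfolding asymp_nbhd_def by blast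
  ultimately show "bounded_in Y EntY (ey `` (f ` C) - f ` U)"
    by (rule bounded_in_subset[rotated])
qed

lemma asymp_nbhd_complement_image_open:
  assumes X: "ballean X EntX" and Y: "ballean Y EntY"
    and f: "open_map X EntX Y EntY f" "macro_uniform X EntX Y EntY f" "f ` X = Y"
    and V: "asymp_nbhd X EntX V {x\<in>X. f x \<in> B}"
  shows "asymp_nbhd Y EntY (Y - f ` (X - V)) B"
  unfolding asymp_nbhd_def
proof
  fix ey assume ey: "ey \<in> EntY"
  obtain ey' where ey': "ey' \<in> EntY" "converse ey \<subseteq> ey'"
    using ballean_converse_bound[OF Y ey] by blast
  obtain ex where ex: "ex \<in> EntX" "\<forall>x\<in>X. ey' `` {f x} \<subseteq> f ` (ex `` {x})"
    using f(1) ey'(1) unfolding open_map_def by blast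
  obtain ex' where ex': "ex' \<in> EntX" "converse ex \<subseteq> ex'"
    using ballean_converse_bound[OF X ex(1)] by blast
  have "ey `` B - (Y - f ` (X - V)) \<subseteq> f ` (ex' `` {x\<in>X. f x \<in> B} - V)"
  proof
    fix y assume y: "y \<in> ey `` B - (Y - f ` (X - V))"
    then obtain b where b: "b \<in> B" "(b, y) \<in> ey" by blast
    with ballean_entourage_subset[OF Y ey] y obtain u where u: "u \<in> X - V" "y = f u"
      by blast
    from b u ey'(2) have "b \<in> ey' `` {f u}" by blast
    with ex(2) u(1) obtain x where x: "(u, x) \<in> ex" "b = f x" by blast
    with ballean_entourage_subset[OF X ex(1)] have "x \<in> X" by blast
    with x ex'(2) b(1) u show "y \<in> f ` (ex' `` {x\<in>X. f x \<in> B} - V)" by blast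
  qed
  moreover have "bounded_in Y EntY (f ` (ex' `` {x\<in>X. f x \<in> B} - V))"
    using bounded_in_image_macro_uniform[OF f(2,3)] V ex'(1)
    unfolding asymp_nbhd_def by blast
  ultimately show "bounded_in Y EntY (ey `` B - (Y - f ` (X - V)))"
    by (rule bounded_in_subset[rotated])
qed

theorem proposition2p5:
  fixes X :: "'a set" and EntX :: "('a \<times> 'a) set set"
    and Y :: "'b set" and EntY :: "('b \<times> 'b) set set"
    and f :: "'a \<Rightarrow> 'b" and s :: "'b \<Rightarrow> 'a"
  assumes "ballean X EntX" and "ballean Y EntY"
    and "normal_ballean X EntX"
    and "f ` X = Y"
    and "macro_uniform X EntX Y EntY f"
    and "open_map X EntX Y EntY f"
    and "s ` Y \<subseteq> X" and "\<forall>y\<in>Y. f (s y) = y"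
    and "bornologous Y EntY X EntX s"
  shows "normal_ballean Y EntY"
  unfolding normal_ballean_def
proof (intro allI impI)
  fix A B assume A: "A \<subseteq> Y" and "B \<subseteq> Y" and AB: "asymp_disjoint Y EntY A B"
  have sA: "s ` A \<subseteq> X" using A assms(7) by blast
  have fsA: "f ` s ` A = A" using A assms(8) by (force simp: image_image)
  have "asymp_disjoint X EntX (s ` A) {x\<in>X. f x \<in> B}"
    using asymp_disjoint_section_preimage[OF assms(1,2,5,7,8,9) A AB] .
  moreover have "{x\<in>X. f x \<in> B} \<subseteq> X" by blast
  ultimately obtain U V where UV: "U \<subseteq> X" "asymp_nbhd X EntX U (s ` A)"
      "asymp_nbhd X EntX V {x\<in>X. f x \<in> B}" "U \<inter> V = {}"
    using assms(3) sA unfolding normal_ballean_def by meson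
  have "asymp_nbhd Y EntY (f ` U) A"
    using asymp_nbhd_image_open[OF assms(6,5,4) sA UV(2)] fsA by simp
  moreover have "asymp_nbhd Y EntY (Y - f ` (X - V)) B"
    using asymp_nbhd_complement_image_open[OF assms(1,2,6,5,4) UV(3)] .
  moreover have "f ` U \<inter> (Y - f ` (X - V)) = {}" using UV(1,4) by blast
  moreover have "f ` U \<subseteq> Y" using UV(1) assms(4) by blast
  ultimately show "\<exists>U V. U \<subseteq> Y \<and> V \<subseteq> Y \<and> asymp_nbhd Y EntY U A \<and> asymp_nbhd Y EntY V B \<and> U \<inter> V = {}"
    by blast
qed

end
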